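(* Every finitely generated multi-ended group is extraterrestrial.
   Context: A finitely generated group $\Gamma$ is multi-ended if for some finite symmetric generating set $S$ there is a finite set $F\subset\Gamma$ such that removing $F$ from the Cayley graph $\mathrm{Cay}(\Gamma,S)$ leaves at least two infinite connected components. A finitely generated group is extraterrestrial if its Cayley graph with respect to some (equivalently any) finite symmetric generating set is extraterrestrial, where a graph $G=(V,E)$ is extraterrestrial if for every $m$ there is $k$ such that for every $r$ there is an $(m,k,r)$-UFO: pairwise disjoint finite $U,F,O\subseteq V$ with $U\neq\emptyset$, $|U|\ge m|F|$, a bijection $\mu:U\to O$ with $d_G(u,\mu(u))\le k$, and every path from $U$ to $O$ either contains a vertex of $F$ or has length at least $r$. *)

theory Defs
  imports "HOL-Algebra.Algebra" "HOL-Library.Extended_Nat"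
begin

definition is_walk :: "'v set \<Rightarrow> ('v \<Rightarrow> 'v \<Rightarrow> bool) \<Rightarrow> 'v list \<Rightarrow> bool" where
  "is_walk V E p \<longleftrightarrow> p \<noteq> [] \<and> set p \<subseteq> V \<and> (\<forall>i. Suc i < length p \<longrightarrow> E (p ! i) (p ! Suc i))"

definition is_path :: "'v set \<Rightarrow> ('v \<Rightarrow> 'v \<Rightarrow> bool) \<Rightarrow> 'v list \<Rightarrow> bool" where
  "is_path V E p \<longleftrightarrow> is_walk V E p \<and> distinct p"

definition walk_length :: "'v list \<Rightarrow> nat" where
  "walk_length p = length p - 1"

text \<open>Graph distance (infinite if no walk exists).\<close>
definition graph_dist :: "'v set \<Rightarrow> ('v \<Rightarrow> 'v \<Rightarrow> bool) \<Rightarrow> 'v \<Rightarrow> 'v \<Rightarrow> enat" where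
  "graph_dist V E u v =
     (INF p \<in> {p. is_walk V E p \<and> hd p = u \<and> last p = v}. enat (walk_length p))"

definition component :: "'v set \<Rightarrow> ('v \<Rightarrow> 'v \<Rightarrow> bool) \<Rightarrow> 'v \<Rightarrow> 'v set" where
  "component V E x = {y. \<exists>p. is_walk V E p \<and> hd p = x \<and> last p = y}"

definition is_UFO :: "'v set \<Rightarrow> ('v \<Rightarrow> 'v \<Rightarrow> bool) \<Rightarrow> nat \<Rightarrow> nat \<Rightarrow> nat
    \<Rightarrow> 'v set \<Rightarrow> 'v set \<Rightarrow> 'v set \<Rightarrow> bool" where
  "is_UFO V E m k r U F Ob \<longleftrightarrow>
     U \<subseteq> V \<and> F \<subseteq> V \<and> Ob \<subseteq> V \<and> finite U \<and> finite F \<and> finite Ob \<and>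
     U \<inter> F = {} \<and> U \<inter> Ob = {} \<and> F \<inter> Ob = {} \<and> U \<noteq> {} \<and>
     card U \<ge> m * card F \<and>
     (\<exists>\<mu>. bij_betw \<mu> U Ob \<and> (\<forall>u\<in>U. graph_dist V E u (\<mu> u) \<le> enat k)) \<and>
     (\<forall>p. is_path V E p \<and> hd p \<in> U \<and> last p \<in> Ob \<longrightarrow>
          set p \<inter> F \<noteq> {} \<or> walk_length p \<ge> r)"

definition extraterrestrial_graph :: "'v set \<Rightarrow> ('v \<Rightarrow> 'v \<Rightarrow> bool) \<Rightarrow> bool" where
  "extraterrestrial_graph V E \<longleftrightarrow>
     (\<forall>m. \<exists>k. \<forall>r. \<exists>U F Ob. is_UFO V E m k r U F Ob)"

definition finite_symm_gen_set :: "('a, 'b) monoid_scheme \<Rightarrow> 'a set \<Rightarrow> bool" where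
  "finite_symm_gen_set G S \<longleftrightarrow>
     finite S \<and> S \<subseteq> carrier G \<and> (\<forall>s\<in>S. inv\<^bsub>G\<^esub> s \<in> S) \<and> generate G S = carrier G"

definition finitely_generated :: "('a, 'b) monoid_scheme \<Rightarrow> bool" where
  "finitely_generated G \<longleftrightarrow> (\<exists>S. finite S \<and> S \<subseteq> carrier G \<and> generate G S = carrier G)"

definition cayley_adj :: "('a, 'b) monoid_scheme \<Rightarrow> 'a set \<Rightarrow> 'a \<Rightarrow> 'a \<Rightarrow> bool" where
  "cayley_adj G S g h \<longleftrightarrow> g \<in> carrier G \<and> (\<exists>s\<in>S. h = g \<otimes>\<^bsub>G\<^esub> s)"

definition multi_ended :: "('a, 'b) monoid_scheme \<Rightarrow> bool" where
  "multi_ended G \<longleftrightarrow>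
     (\<exists>S. finite_symm_gen_set G S \<and>
       (\<exists>F. finite F \<and> F \<subseteq> carrier G \<and>
         (\<exists>x\<in>carrier G - F. \<exists>y\<in>carrier G - F.
            infinite (component (carrier G - F) (cayley_adj G S) x) \<and>
            infinite (component (carrier G - F) (cayley_adj G S) y) \<and>
            component (carrier G - F) (cayley_adj G S) x \<noteq>
            component (carrier G - F) (cayley_adj G S) y)))"

definition extraterrestrial_group :: "('a, 'b) monoid_scheme \<Rightarrow> bool" where
  "extraterrestrial_group G \<longleftrightarrow>
     (\<exists>S. finite_symm_gen_set G S \<and> extraterrestrial_graph (carrier G) (cayley_adj G S))"

end

theory Submission
  imports Defs
begin

text \<open>Remove a finite set F leaving two distinct infinite components C and D of the Cayley
  graph. Given m, pick U \<subseteq> C and O \<subseteq> D with m |F| + 1 elements each and any bijection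
  \<mu> : U \<rightarrow> O. The Cayley graph is connected, so the distances d(u, \<mu> u) are bounded by
  some k. A path from U to O avoiding F would stay in C, so there is none, and (U, F, O)
  is an (m, k, r)-UFO for every r.\<close>

lemma is_walk_Cons:
  "is_walk V E (x # p) \<longleftrightarrow> x \<in> V \<and> (p = [] \<or> E x (hd p) \<and> is_walk V E p)"
  by (cases p) (auto simp: is_walk_def nth_Cons split: nat.splits)

lemma is_walk_append:
  "is_walk V E p \<Longrightarrow> is_walk V E q \<Longrightarrow> last p = hd q \<Longrightarrow> is_walk V E (p @ tl q)"
proof (induction p)
  case Nil
  then show ?case by (simp add: is_walk_def)
next
  case (Cons a p)
  then show ?case by (cases q) (auto simp: is_walk_Cons hd_append)
qed

lemma graph_dist_le_walk_length:
  "is_walk V E p \<Longrightarrow> hd p = u \<Longrightarrow> last p = v \<Longrightarrow> graph_dist V E u v \<le> enat (walk_length p)"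
  unfolding graph_dist_def by (rule INF_lower) auto

lemma component_subset: "component V E x \<subseteq> V"
  by (auto simp: component_def is_walk_def)

lemma self_in_component: "x \<in> V \<Longrightarrow> x \<in> component V E x"
  unfolding component_def by (auto intro!: exI[of _ "[x]"] simp: is_walk_def)

lemma graph_dist_finite_in_component:
  assumes "v \<in> component V E u"
  shows "graph_dist V E u v \<noteq> \<infinity>"
proof -
  obtain p where "is_walk V E p" "hd p = u" "last p = v"
    using assms by (auto simp: component_def)
  then have "graph_dist V E u v \<le> enat (walk_length p)"
    by (rule graph_dist_le_walk_length)
  then show ?thesis by (cases "graph_dist V E u v") auto
qed

lemma component_walk_closed:
  assumes "z \<in> component V E x" "is_walk V E q" "hd q = z"
  shows "last q \<in> component V E x"
proof -
  obtain p where p: "is_walk V E p" "hd p = x" "last p = z"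
    using assms(1) by (auto simp: component_def)
  then have "p \<noteq> []" by (simp add: is_walk_def)
  then have "hd (p @ tl q) = x" "last (p @ tl q) = last q"
    using p assms(2,3) by (cases q; auto simp: is_walk_def)+
  moreover have "is_walk V E (p @ tl q)"
    using is_walk_append[OF p(1) assms(2)] p(3) assms(3) by simp
  ultimately show ?thesis
    unfolding component_def by (intro CollectI exI[of _ "p @ tl q"]) simp
qed

lemma component_trans:
  assumes "y \<in> component V E x" "z \<in> component V E y"
  shows "z \<in> component V E x"
proof -
  obtain q where "is_walk V E q" "hd q = y" "last q = z"
    using assms(2) by (auto simp: component_def)
  then show ?thesis using component_walk_closed[OF assms(1)] by blast
qed

lemma component_edge_closed:
  "z \<in> component V E x \<Longrightarrow> w \<in> V \<Longrightarrow> E z w \<Longrightarrow> w \<in> component V E x"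
  using component_walk_closed[of z V E x "[z, w]"] component_subset[of V E x]
  by (auto simp: is_walk_Cons)

lemma walk_avoiding_stays_in_component:
  assumes "is_walk V E p" "set p \<inter> F = {}" "hd p \<in> component (V - F) E x"
  shows "last p \<in> component (V - F) E x"
proof -
  have "is_walk (V - F) E p"
    using assms(1,2) by (auto simp: is_walk_def)
  from component_walk_closed[OF assms(3) this] show ?thesis by simp
qed

lemma walk_hd_in_component_last:
  assumes sym: "\<And>a b. E a b \<Longrightarrow> E b a"
  shows "is_walk V E p \<Longrightarrow> hd p \<in> component V E (last p)"
proof (induction p)
  case Nil
  then show ?case by (simp add: is_walk_def)
next
  case (Cons a p)
  show ?case
  proof (cases "p = []")
    case True
    then show ?thesis using Cons.prems by (simp add: is_walk_Cons self_in_component)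
  next
    case False
    then have "a \<in> V" "E (hd p) a" "hd p \<in> component V E (last p)"
      using Cons sym by (auto simp: is_walk_Cons)
    then show ?thesis using False component_edge_closed by simp
  qed
qed

lemma component_sym:
  assumes "\<And>a b. E a b \<Longrightarrow> E b a" "y \<in> component V E x"
  shows "x \<in> component V E y"
  using assms walk_hd_in_component_last[of E V] unfolding component_def by blast

lemma components_disjoint:
  assumes sym: "\<And>a b. E a b \<Longrightarrow> E b a"
    and distinct: "component V E x \<noteq> component V E y"
  shows "component V E x \<inter> component V E y = {}"
proof (rule ccontr)
  have sub: "component V E x' \<subseteq> component V E y'"
    if "z \<in> component V E x'" "z \<in> component V E y'" for x' y' z
  proof
    fix w assume w: "w \<in> component V E x'"
    have "x' \<in> component V E y'"
      using component_trans[OF that(2) component_sym[OF sym that(1)]] .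
    from component_trans[OF this w] show "w \<in> component V E y'" .
  qed
  assume "component V E x \<inter> component V E y \<noteq> {}"
  then obtain z where z: "z \<in> component V E x" "z \<in> component V E y" by blast
  have "component V E x = component V E y"
    using sub[OF z] sub[OF z(2,1)] by (rule equalityI)
  with distinct show False ..
qed

lemma walk_between_components_meets:
  assumes sym: "\<And>a b. E a b \<Longrightarrow> E b a"
    and distinct: "component (V - F) E x \<noteq> component (V - F) E y"
    and p: "is_walk V E p" "hd p \<in> component (V - F) E x" "last p \<in> component (V - F) E y"
  shows "set p \<inter> F \<noteq> {}"
proof
  assume "set p \<inter> F = {}"
  from walk_avoiding_stays_in_component[OF p(1) this p(2)]
  show False
    using p(3) components_disjoint[OF sym distinct] by blast
qed

lemma enat_uniform_bound:
  assumes "finite A" "\<And>a. a \<in> A \<Longrightarrow> f a \<noteq> \<infinity>"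
  shows "\<exists>k. \<forall>a\<in>A. f a \<le> enat k"
proof (intro exI ballI)
  fix a assume a: "a \<in> A"
  have "f a = enat (the_enat (f a))" using assms(2)[OF a] by (cases "f a") auto
  also have "\<dots> \<le> enat (\<Sum>a\<in>A. the_enat (f a))"
    using assms(1) a by (auto intro!: member_le_sum)
  finally show "f a \<le> enat (\<Sum>a\<in>A. the_enat (f a))" .
qed

lemma extraterrestrial_graph_if_two_infinite_components:
  assumes sym: "\<And>a b. E a b \<Longrightarrow> E b a"
    and connected: "\<And>u v. u \<in> V \<Longrightarrow> v \<in> V \<Longrightarrow> v \<in> component V E u"
    and F: "finite F" "F \<subseteq> V"
    and infinite: "infinite (component (V - F) E x)" "infinite (component (V - F) E y)"
    and distinct: "component (V - F) E x \<noteq> component (V - F) E y"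
  shows "extraterrestrial_graph V E"
  unfolding extraterrestrial_graph_def
proof
  fix m
  let ?n = "m * card F + 1"
  let ?Cx = "component (V - F) E x" and ?Cy = "component (V - F) E y"
  have disjoint: "?Cx \<inter> ?Cy = {}"
    using components_disjoint[OF sym distinct] .
  obtain U where U: "finite U" "card U = ?n" "U \<subseteq> ?Cx"
    using infinite_arbitrarily_large[OF infinite(1)] by blast
  obtain Ob where Ob: "finite Ob" "card Ob = ?n" "Ob \<subseteq> ?Cy"
    using infinite_arbitrarily_large[OF infinite(2)] by blast
  have UOb: "U \<subseteq> V - F" "Ob \<subseteq> V - F"
    using U(3) Ob(3) component_subset[of "V - F" E] by blast+
  obtain \<mu> where \<mu>: "bij_betw \<mu> U Ob"
    using finite_same_card_bij[OF U(1) Ob(1)] U(2) Ob(2) by auto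
  have finite_dist: "graph_dist V E u (\<mu> u) \<noteq> \<infinity>" if "u \<in> U" for u
  proof -
    have "u \<in> V" "\<mu> u \<in> V"
      using that UOb bij_betwE[OF \<mu>] by blast+
    then show ?thesis by (intro graph_dist_finite_in_component connected)
  qed
  have "\<exists>k. \<forall>u\<in>U. graph_dist V E u (\<mu> u) \<le> enat k"
    by (rule enat_uniform_bound[OF U(1)]) (rule finite_dist)
  then obtain k where k: "\<forall>u\<in>U. graph_dist V E u (\<mu> u) \<le> enat k" ..
  have separated: "set p \<inter> F \<noteq> {}"
    if "is_path V E p" "hd p \<in> U" "last p \<in> Ob" for p
  proof (rule walk_between_components_meets[OF sym distinct])
    show "is_walk V E p" using that(1) by (simp add: is_path_def)
    show "hd p \<in> ?Cx" "last p \<in> ?Cy" using that(2,3) U(3) Ob(3) by blast+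
  qed
  have "is_UFO V E m k r U F Ob" for r
    unfolding is_UFO_def
  proof (intro conjI)
    show "U \<subseteq> V" "Ob \<subseteq> V" "U \<inter> F = {}" "F \<inter> Ob = {}"
      using UOb by auto
    show "U \<inter> Ob = {}"
      using U(3) Ob(3) disjoint by blast
    show "U \<noteq> {}" "m * card F \<le> card U"
      using U(2) by auto
    show "\<exists>\<mu>. bij_betw \<mu> U Ob \<and> (\<forall>u\<in>U. graph_dist V E u (\<mu> u) \<le> enat k)"
      using \<mu> k by blast
    show "\<forall>p. is_path V E p \<and> hd p \<in> U \<and> last p \<in> Ob \<longrightarrow> set p \<inter> F \<noteq> {} \<or> r \<le> walk_length p"
      using separated by blast
  qed (use U(1) Ob(1) F in simp_all)
  then show "\<exists>k. \<forall>r. \<exists>U F Ob. is_UFO V E m k r U F Ob" by blast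
qed

lemma cayley_adj_sym:
  fixes G (structure)
  assumes "group G" "S \<subseteq> carrier G" "\<And>s. s \<in> S \<Longrightarrow> inv s \<in> S"
    and "cayley_adj G S g h"
  shows "cayley_adj G S h g"
proof -
  interpret group G by fact
  obtain s where s: "g \<in> carrier G" "s \<in> S" "h = g \<otimes> s"
    using assms(4) by (auto simp: cayley_adj_def)
  have "s \<in> carrier G" "inv s \<in> S"
    using assms(2,3) s(2) by auto
  then have "h \<in> carrier G" "g = h \<otimes> inv s"
    using s by (simp_all add: m_assoc)
  with \<open>inv s \<in> S\<close> show ?thesis
    unfolding cayley_adj_def by blast
qed

lemma cayley_component_mult_generate:
  fixes G (structure)
  assumes "group G" "S \<subseteq> carrier G" "\<And>s. s \<in> S \<Longrightarrow> inv s \<in> S"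
    and "h \<in> generate G S" "x \<in> carrier G"
  shows "x \<otimes> h \<in> component (carrier G) (cayley_adj G S) x"
proof -
  interpret group G by fact
  show ?thesis
    using assms(4,5)
  proof (induction h arbitrary: x rule: generate.induct)
    case one
    then show ?case by (simp add: self_in_component)
  next
    case (incl h)
    then have "x \<otimes> h \<in> carrier G" "cayley_adj G S x (x \<otimes> h)"
      using assms(2) by (auto simp: cayley_adj_def)
    then show ?case
      using component_edge_closed[OF self_in_component[OF incl.prems]] by blast
  next
    case (inv h)
    then have "x \<otimes> inv h \<in> carrier G" "cayley_adj G S x (x \<otimes> inv h)"
      using assms(2,3) by (auto simp: cayley_adj_def)
    then show ?case
      using component_edge_closed[OF self_in_component[OF inv.prems]] by blast
  next
    case (eng h1 h2)
    have h1: "h1 \<in> carrier G" "x \<otimes> h1 \<in> carrier G"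
      using generate_incl[OF assms(2)] eng by auto
    have "x \<otimes> h1 \<otimes> h2 \<in> component (carrier G) (cayley_adj G S) x"
      using component_trans[OF eng.IH(1)[OF eng.prems] eng.IH(2)[OF h1(2)]] .
    then show ?case
      using generate_incl[OF assms(2)] eng h1 by (simp add: m_assoc subsetD)
  qed
qed

lemma cayley_graph_connected:
  fixes G (structure)
  assumes "group G" "finite_symm_gen_set G S" "u \<in> carrier G" "v \<in> carrier G"
  shows "v \<in> component (carrier G) (cayley_adj G S) u"
proof -
  interpret group G by fact
  have "inv u \<otimes> v \<in> generate G S"
    using assms by (simp add: finite_symm_gen_set_def)
  then have "u \<otimes> (inv u \<otimes> v) \<in> component (carrier G) (cayley_adj G S) u"
    using assms by (intro cayley_component_mult_generate) (auto simp: finite_symm_gen_set_def)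
  then show ?thesis
    using assms(3,4) by (simp add: m_assoc[symmetric])
qed

theorem mainTheorem6:
  fixes G :: "('a, 'b) monoid_scheme"
  assumes "group G"
    and "finitely_generated G"
    and "multi_ended G"
  shows "extraterrestrial_group G"
proof -
  \<comment> \<open>Being multi-ended already provides a finite generating set.\<close>
  obtain S F x y where S: "finite_symm_gen_set G S"
    and F: "finite F" "F \<subseteq> carrier G"
    and infinite: "infinite (component (carrier G - F) (cayley_adj G S) x)"
      "infinite (component (carrier G - F) (cayley_adj G S) y)"
    and distinct: "component (carrier G - F) (cayley_adj G S) x \<noteq>
      component (carrier G - F) (cayley_adj G S) y"
    using assms(3) unfolding multi_ended_def by blast
  have "extraterrestrial_graph (carrier G) (cayley_adj G S)"
  proof (rule extraterrestrial_graph_if_two_infinite_components[OF _ _ F infinite distinct])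
    show "cayley_adj G S g h \<Longrightarrow> cayley_adj G S h g" for g h
      using cayley_adj_sym[OF assms(1)] S by (auto simp: finite_symm_gen_set_def)
    show "u \<in> carrier G \<Longrightarrow> v \<in> carrier G \<Longrightarrow> v \<in> component (carrier G) (cayley_adj G S) u"
      for u v
      using cayley_graph_connected[OF assms(1) S] .
  qed
  with S show ?thesis
    unfolding extraterrestrial_group_def by blast
qed

end
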